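(* Let $\sigma$ be a strongly erasing $k$-block substitution with $w_\epsilon\ne1^k$ that satisfies the optimality condition. Let $(w^{(n)})_{n\in\mathbb N_0}$ be any sequence of finite binary words. Then there exist $x\in[w^{(0)}]$ and positive integers $h_1,h_2,\dots$ such that $f_\sigma^{h_n}(x)\in[w^{(n)}]$ for every $n\in\mathbb N$.
   Context: Notation: $\mathbb I=[0,1]$. $\{0,1\}^*$ and $\{0,1\}^\omega$ denote finite and infinite binary words, and $\epsilon$ is the empty word. For a word $w$, set $0.w=\sum_iw_i2^{-i}$. For $x\in(0,1]$, $\widetilde x$ is the unique infinite binary expansion of $x$ not ending in $0^\infty$. For $w\in\{0,1\}^*$, the cylinder is $[w]=\{x\in\mathbb I: x=0.wv\text{ for some finite or infinite word } v\}$. Fix $k\ge2$. An erasing $k$-block substitution is a map $\sigma:\{0,1\}^k\to\{0,1\}^*$ with exactly one block $w_\epsilon$ such that $\sigma(w_\epsilon)=\epsilon$. It acts blockwise on infinite words and on finite words of length a multiple of $k$. $k$-rounding: a $k$-rounding of $w$ is any word $wv$ whose length is the least multiple of $k$ that is $\ge|w|$; if $|w|$ is a multiple of $k$, the only $k$-rounding of $w$ is $w$. $\sigma$ is strongly erasing if for every $w\in\{0,1\}^*$ there exist $n\in\mathbb N$ and words $r_0,\dots,r_{n-1}$ such that $r_0$ is a $k$-rounding of $w$, $r_j$ is a $k$-rounding of $\sigma(r_{j-1})$ for $1\le j\le n-1$, and $\sigma(r_{n-1})=\epsilon$. The map $f_\sigma:\mathbb I\to\mathbb I$ is defined by $f_\sigma(x)=0.\sigma(\widetilde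 x)$ if $x\in(0,1]$ and $\widetilde x\neq w_\epsilon^\infty$, and $f_\sigma(x)=0$ otherwise. Optimality condition: every $w\in\{0,1\}^\omega$ can be written as $w=\prod_{i\ge1}\sigma(b_i)$ with blocks $b_i\in\{0,1\}^k$ satisfying $\sigma(b_i)\ne\epsilon$. *)

theory Defs
  imports Complex_Main
begin

text \<open>Binary words: True = 1, False = 0. Finite words are bool lists, infinite words
  are functions nat \<Rightarrow> bool (position 0 is the first letter w_1).\<close>

definition val_fin :: "bool list \<Rightarrow> real" where
  "val_fin w = (\<Sum>i<length w. (if w ! i then 1 else 0) / 2 ^ (i + 1))"

definition val_inf :: "(nat \<Rightarrow> bool) \<Rightarrow> real" where
  "val_inf s = (\<Sum>i. (if s i then 1 else 0) / 2 ^ (i + 1))"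

definition bexp :: "real \<Rightarrow> (nat \<Rightarrow> bool)" where
  "bexp x = (THE s. val_inf s = x \<and> (\<forall>n. \<exists>m\<ge>n. s m))"

definition cyl :: "bool list \<Rightarrow> real set" where
  "cyl w = {x. 0 \<le> x \<and> x \<le> 1 \<and>
     ((\<exists>v::bool list. x = val_fin (w @ v)) \<or>
      (\<exists>v::nat \<Rightarrow> bool. x = val_inf (\<lambda>i. if i < length w then w ! i else v (i - length w))))}"

definition block :: "nat \<Rightarrow> (nat \<Rightarrow> bool) \<Rightarrow> nat \<Rightarrow> bool list" where
  "block k s j = map s [j * k..<j * k + k]"

definition sigma_fin :: "nat \<Rightarrow> (bool list \<Rightarrow> bool list) \<Rightarrow> bool list \<Rightarrow> bool list" where
  "sigma_fin k \<sigma> w = concat (map (\<lambda>j. \<sigma> (take k (drop (j * k) w))) [0..<length w div k])"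

definition offs :: "(nat \<Rightarrow> bool list) \<Rightarrow> nat \<Rightarrow> nat" where
  "offs u j = (\<Sum>i<j. length (u i))"

text \<open>Value 0.(u_0 u_1 u_2 ...) of an infinite concatenation of finite words
  (which may itself be a finite or infinite word).\<close>
definition val_concat :: "(nat \<Rightarrow> bool list) \<Rightarrow> real" where
  "val_concat u = (\<Sum>j. val_fin (u j) / 2 ^ offs u j)"

text \<open>The infinite word s equals the product u_0 u_1 u_2 ...
  (used only with all u_j nonempty, so every position is covered).\<close>
definition is_concat :: "(nat \<Rightarrow> bool) \<Rightarrow> (nat \<Rightarrow> bool list) \<Rightarrow> bool" where
  "is_concat s u \<longleftrightarrow> (\<forall>j i. i < length (u j) \<longrightarrow> s (offs u j + i) = u j ! i)"

definition erasing_subst :: "nat \<Rightarrow> (bool list \<Rightarrow> bool list) \<Rightarrow> bool list \<Rightarrow> bool" where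
  "erasing_subst k \<sigma> we \<longleftrightarrow> length we = k \<and> \<sigma> we = [] \<and>
     (\<forall>b. length b = k \<and> \<sigma> b = [] \<longrightarrow> b = we)"

definition k_rounding :: "nat \<Rightarrow> bool list \<Rightarrow> bool list \<Rightarrow> bool" where
  "k_rounding k w r \<longleftrightarrow> (\<exists>v. r = w @ v) \<and> k dvd length r \<and> length w \<le> length r \<and>
     (\<forall>m. k dvd m \<and> length w \<le> m \<longrightarrow> length r \<le> m)"

definition strongly_erasing :: "nat \<Rightarrow> (bool list \<Rightarrow> bool list) \<Rightarrow> bool" where
  "strongly_erasing k \<sigma> \<longleftrightarrow> (\<forall>w. \<exists>rs. rs \<noteq> [] \<and> k_rounding k w (rs ! 0) \<and>
     (\<forall>j. 1 \<le> j \<and> j < length rs \<longrightarrow> k_rounding k (sigma_fin k \<sigma> (rs ! (j - 1))) (rs ! j)) \<and>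
     sigma_fin k \<sigma> (last rs) = [])"

definition f_sigma :: "nat \<Rightarrow> (bool list \<Rightarrow> bool list) \<Rightarrow> bool list \<Rightarrow> real \<Rightarrow> real" where
  "f_sigma k \<sigma> we x =
     (if 0 < x \<and> x \<le> 1 \<and> bexp x \<noteq> (\<lambda>i. we ! (i mod k))
      then val_concat (\<lambda>j. \<sigma> (block k (bexp x) j)) else 0)"

definition optimal :: "nat \<Rightarrow> (bool list \<Rightarrow> bool list) \<Rightarrow> bool" where
  "optimal k \<sigma> \<longleftrightarrow> (\<forall>s::nat \<Rightarrow> bool. \<exists>b::nat \<Rightarrow> bool list.
     (\<forall>i. length (b i) = k \<and> \<sigma> (b i) \<noteq> []) \<and> is_concat s (\<lambda>i. \<sigma> (b i)))"

end

(*
  Points of (0,1] whose binary expansion has infinitely many ones are identified with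
  these expansions, and on a word that does not end in w_eps^omega the map f_sigma acts as
  sigma applied blockwise.  So it suffices to find one infinite word s starting with W 0
  such that every iterate sigma^m(s) has infinitely many ones and infinitely many
  non-erased blocks, and every W n starts some iterate sigma^h(s) with h >= 1.

  The word s is the limit of finite words p_0, p_1, ..., each a prefix of the next.
  Strong erasure lets us extend any finite word so that some image sigma^h starts with a
  prescribed word: round up, apply sigma until everything is erased, and refill the
  rounding gaps with preimages, which exist for every infinite word by optimality.
  Aiming at a deep preimage of an aperiodic word keeps the first iterates aperiodic,
  because sigma maps eventually periodic words to eventually periodic words; aperiodic
  words have ones and non-erased blocks arbitrarily far out, and long prefixes of p_n
  record such witnesses beyond position n, which then persist in the limit.
*)
theory Submission
  imports Defs "HOL-Library.Omega_Words_Fun" "HOL-Library.Sublist"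
begin

section \<open>Prefixes of infinite words\<close>

lemma prefix_subsequence_iff:
  "prefix u (x [0 \<rightarrow> l]) \<longleftrightarrow> length u \<le> l \<and> x [0 \<rightarrow> length u] = u"
proof
  assume "prefix u (x [0 \<rightarrow> l])"
  then obtain c where c: "x [0 \<rightarrow> l] = u @ c" by (auto simp: prefix_def)
  then have "length u \<le> l" by (metis le_add1 length_append subsequence_length minus_nat.diff_0)
  moreover have "x [0 \<rightarrow> length u] = take (length u) (x [0 \<rightarrow> l])"
    using \<open>length u \<le> l\<close> by (simp add: min_absorb1)
  ultimately show "length u \<le> l \<and> x [0 \<rightarrow> length u] = u" using c by simp
next
  assume "length u \<le> l \<and> x [0 \<rightarrow> length u] = u"
  then show "prefix u (x [0 \<rightarrow> l])"
    using subsequence_append[where i = "length u" and j = "l - length u" and w = x] by (simp add: prefix_def)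
qed

lemma prefix_of_word_prefix:
  "x [0 \<rightarrow> length v] = v \<Longrightarrow> prefix u v \<Longrightarrow> x [0 \<rightarrow> length u] = u"
  by (metis prefix_subsequence_iff)

lemma nested_lists_limit:
  fixes p :: "nat \<Rightarrow> 'a list"
  assumes nested: "\<And>n. prefix (p n) (p (Suc n))" and long: "\<And>i. \<exists>n. i < length (p n)"
  obtains x where "\<And>n. x [0 \<rightarrow> length (p n)] = p n"
proof
  define x where "x i = p (SOME n. i < length (p n)) ! i" for i
  have mono: "prefix (p a) (p b)" if "a \<le> b" for a b
    using that
  proof (induction b rule: dec_induct)
    case (step b)
    show ?case by (rule prefix_order.trans[OF step.IH nested])
  qed simp
  have agree: "p a ! i = p b ! i" if "i < length (p a)" "i < length (p b)" for a b i
  proof (cases "a \<le> b")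
    case True
    then obtain c where "p b = p a @ c" using mono[of a b] by (auto simp: prefix_def)
    then show ?thesis using that(1) by (simp add: nth_append)
  next
    case False
    then obtain c where "p a = p b @ c" using mono[of b a] by (auto simp: prefix_def)
    then show ?thesis using that(2) by (simp add: nth_append)
  qed
  fix n show "x [0 \<rightarrow> length (p n)] = p n"
  proof (rule nth_equalityI)
    fix i assume "i < length (x [0 \<rightarrow> length (p n)])"
    then have "i < length (p n)" by simp
    moreover have "i < length (p (SOME n. i < length (p n)))" by (rule someI_ex[OF long])
    ultimately have "x i = p n ! i" unfolding x_def by (intro agree)
    then show "x [0 \<rightarrow> length (p n)] ! i = p n ! i" using \<open>i < length (p n)\<close> by simp
  qed simp
qed

lemma INFM_shift: "(\<exists>\<^sub>\<infinity>i. t i) \<Longrightarrow> \<exists>\<^sub>\<infinity>i. t (Suc i)"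
  unfolding INFM_nat_le by (metis Suc_le_D Suc_le_mono le_SucI)

section \<open>Infinite concatenations\<close>

definition inf_concat :: "(nat \<Rightarrow> bool list) \<Rightarrow> nat \<Rightarrow> bool" where
  "inf_concat u i = (let j = LEAST j. i < offs u (Suc j) in u j ! (i - offs u j))"

definition offs_unbounded :: "(nat \<Rightarrow> bool list) \<Rightarrow> bool" where
  "offs_unbounded u \<longleftrightarrow> (\<forall>q. \<exists>j. q \<le> offs u j)"

lemma offs_0 [simp]: "offs u 0 = 0"
  by (simp add: offs_def)

lemma offs_Suc: "offs u (Suc j) = offs u j + length (u j)"
  by (simp add: offs_def)

lemma offs_mono: "j \<le> j' \<Longrightarrow> offs u j \<le> offs u j'"
  by (induction j' rule: dec_induct) (auto simp: offs_Suc)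

lemma offs_add: "offs u (R + j) = offs u R + offs (\<lambda>j. u (R + j)) j"
  by (induction j) (simp_all add: offs_Suc)

lemma offs_ge_index:
  assumes "\<And>j. u j \<noteq> []"
  shows "j \<le> offs u j"
proof (induction j)
  case (Suc j)
  have "0 < length (u j)" using assms by simp
  then show ?case unfolding offs_Suc using Suc by linarith
qed simp

lemma offs_cover:
  assumes "i < offs u N"
  obtains j i' where "j < N" "i' < length (u j)" "i = offs u j + i'"
  using assms
proof (induction N)
  case (Suc N)
  show ?case
  proof (cases "i < offs u N")
    case True
    then show ?thesis using Suc.IH Suc.prems(1) less_SucI by blast
  next
    case False
    then show ?thesis using Suc.prems by (intro Suc.prems(1)[of N "i - offs u N"]) (auto simp: offs_Suc)
  qed
qed simp

lemma offs_unbounded_cover: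
  assumes "offs_unbounded u"
  obtains j i' where "i' < length (u j)" "i = offs u j + i'"
proof -
  obtain N where "Suc i \<le> offs u N" using assms unfolding offs_unbounded_def by blast
  then show ?thesis using offs_cover[of i u N] that by auto
qed

lemma is_concat_inf_concat: "is_concat (inf_concat u) u"
  unfolding is_concat_def
proof (intro allI impI)
  fix j i assume i: "i < length (u j)"
  have "(LEAST j'. offs u j + i < offs u (Suc j')) = j"
  proof (rule Least_equality)
    show "offs u j + i < offs u (Suc j)" using i by (simp add: offs_Suc)
  next
    fix y assume y: "offs u j + i < offs u (Suc y)"
    show "j \<le> y"
    proof (rule ccontr)
      assume "\<not> j \<le> y"
      then have "offs u (Suc y) \<le> offs u j" by (intro offs_mono) simp
      then show False using y by simp
    qed
  qed
  then show "inf_concat u (offs u j + i) = u j ! i" by (simp add: inf_concat_def)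
qed

lemma is_concat_unique:
  assumes "offs_unbounded u" and "is_concat s u"
  shows "s = inf_concat u"
proof
  fix i
  obtain j i' where "i' < length (u j)" "i = offs u j + i'"
    using offs_unbounded_cover[OF assms(1)] .
  then show "s i = inf_concat u i"
    using assms(2) is_concat_inf_concat unfolding is_concat_def by simp
qed

lemma length_concat_offs: "length (concat (map u [0..<N])) = offs u N"
  by (induction N) (auto simp: offs_Suc)

lemma nth_concat_offs:
  assumes "j < N" and "i < length (u j)"
  shows "concat (map u [0..<N]) ! (offs u j + i) = u j ! i"
  using assms
proof (induction N)
  case (Suc N)
  show ?case
  proof (cases "j < N")
    case True
    have "offs u (Suc j) \<le> offs u N" using True by (intro offs_mono) simp
    then show ?thesis using True Suc by (simp add: nth_append length_concat_offs offs_Suc)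
  next
    case False
    then have "j = N" using Suc.prems by simp
    then show ?thesis using Suc.prems by (simp add: nth_append length_concat_offs)
  qed
qed simp

lemma inf_concat_prefix: "inf_concat u [0 \<rightarrow> offs u N] = concat (map u [0..<N])"
proof (rule nth_equalityI)
  show "length (inf_concat u [0 \<rightarrow> offs u N]) = length (concat (map u [0..<N]))"
    by (simp add: length_concat_offs)
next
  fix x assume "x < length (inf_concat u [0 \<rightarrow> offs u N])"
  then have "x < offs u N" by simp
  moreover obtain j i where "j < N" "i < length (u j)" "x = offs u j + i"
    using offs_cover[of x u N] \<open>x < offs u N\<close> by metis
  ultimately show "inf_concat u [0 \<rightarrow> offs u N] ! x = concat (map u [0..<N]) ! x"
    using nth_concat_offs is_concat_inf_concat unfolding is_concat_def by simp
qed

section \<open>The substitution on infinite words\<close>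

definition sigma_inf :: "nat \<Rightarrow> (bool list \<Rightarrow> bool list) \<Rightarrow> (nat \<Rightarrow> bool) \<Rightarrow> nat \<Rightarrow> bool" where
  "sigma_inf k \<sigma> t = inf_concat (\<lambda>j. \<sigma> (block k t j))"

definition nonerased_often :: "nat \<Rightarrow> bool list \<Rightarrow> (nat \<Rightarrow> bool) \<Rightarrow> bool" where
  "nonerased_often k we t \<longleftrightarrow> (\<exists>\<^sub>\<infinity>j. block k t j \<noteq> we)"

lemma length_block [simp]: "length (block k t j) = k"
  by (simp add: block_def)

lemma nth_block [simp]: "r < k \<Longrightarrow> block k t j ! r = t (j * k + r)"
  by (simp add: block_def)

lemma take_drop_eq_block:
  assumes "t [0 \<rightarrow> length w] = w" and "Suc j * k \<le> length w"
  shows "take k (drop (j * k) w) = block k t j"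
proof (rule nth_equalityI)
  fix i assume "i < length (take k (drop (j * k) w))"
  then have "i < k" "j * k + i < length w" using assms(2) by auto
  then show "take k (drop (j * k) w) ! i = block k t j ! i"
    using subsequence_nth[of "j * k + i" "length w" 0 t] assms(1) by (simp add: add.commute)
qed (use assms(2) in simp)

lemma Suc_mult_le_of_less_div: "j < l div k \<Longrightarrow> Suc j * k \<le> (l::nat)"
  by (metis div_times_less_eq_dividend le_trans less_eq_Suc_le mult_le_mono1 mult.commute)

lemma sigma_fin_eq_concat_blocks:
  assumes "t [0 \<rightarrow> length w] = w"
  shows "sigma_fin k \<sigma> w = concat (map (\<lambda>j. \<sigma> (block k t j)) [0..<length w div k])"
  unfolding sigma_fin_def
proof (rule arg_cong[where f = concat], rule map_cong[OF refl])
  fix j assume "j \<in> set [0..<length w div k]"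
  then have "Suc j * k \<le> length w" by (intro Suc_mult_le_of_less_div) simp
  then show "\<sigma> (take k (drop (j * k) w)) = \<sigma> (block k t j)"
    by (simp add: take_drop_eq_block[OF assms])
qed

lemma sigma_inf_prefix:
  assumes "t [0 \<rightarrow> length w] = w"
  shows "sigma_inf k \<sigma> t [0 \<rightarrow> length (sigma_fin k \<sigma> w)] = sigma_fin k \<sigma> w"
  unfolding sigma_inf_def sigma_fin_eq_concat_blocks[OF assms] length_concat_offs
  by (rule inf_concat_prefix)

lemma funpow_sigma_inf_prefix:
  assumes "t [0 \<rightarrow> length w] = w"
  shows "(sigma_inf k \<sigma> ^^ m) t [0 \<rightarrow> length ((sigma_fin k \<sigma> ^^ m) w)] = (sigma_fin k \<sigma> ^^ m) w"
  using assms by (induction m) (simp_all add: sigma_inf_prefix)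

lemma erasing_subst_nonempty: "erasing_subst k \<sigma> we \<Longrightarrow> length b = k \<Longrightarrow> b \<noteq> we \<Longrightarrow> \<sigma> b \<noteq> []"
  unfolding erasing_subst_def by auto

lemma offs_unbounded_sigma:
  assumes "erasing_subst k \<sigma> we" and "nonerased_often k we t"
  shows "offs_unbounded (\<lambda>j. \<sigma> (block k t j))"
  unfolding offs_unbounded_def
proof
  let ?u = "\<lambda>j. \<sigma> (block k t j)"
  fix q show "\<exists>j. q \<le> offs ?u j"
  proof (induction q)
    case (Suc q)
    then obtain j where j: "q \<le> offs ?u j" by blast
    obtain j' where j': "j \<le> j'" "block k t j' \<noteq> we"
      using assms(2) unfolding nonerased_often_def INFM_nat_le by blast
    have "Suc (offs ?u j') \<le> offs ?u (Suc j')"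
      using erasing_subst_nonempty[OF assms(1) length_block j'(2)] by (simp add: offs_Suc Suc_le_eq)
    then show ?case using j offs_mono[OF j'(1), of ?u] by (meson Suc_le_mono le_trans)
  qed simp
qed

lemma block_conc_high:
  assumes "0 < k" and "k dvd length w"
  shows "block k (w \<frown> z) (length w div k + j) = block k z j"
proof (rule nth_equalityI)
  fix i assume "i < length (block k (w \<frown> z) (length w div k + j))"
  moreover have "(length w div k + j) * k = length w + j * k" using assms by (auto simp: algebra_simps)
  ultimately show "block k (w \<frown> z) (length w div k + j) ! i = block k z j ! i" by simp
qed simp

lemma nonerased_often_conc_iff:
  assumes "0 < k" and "k dvd length w"
  shows "nonerased_often k we (w \<frown> z) \<longleftrightarrow> nonerased_often k we z"
  unfolding nonerased_often_def INFM_nat_le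
proof (intro iffI allI)
  fix n
  assume "\<forall>m. \<exists>j\<ge>m. block k (w \<frown> z) j \<noteq> we"
  then obtain j where "length w div k + n \<le> j" "block k (w \<frown> z) j \<noteq> we" by blast
  then show "\<exists>j\<ge>n. block k z j \<noteq> we"
    using block_conc_high[OF assms, of z "j - length w div k"] by (intro exI[of _ "j - length w div k"]) auto
next
  fix n
  assume "\<forall>m. \<exists>j\<ge>m. block k z j \<noteq> we"
  then obtain j where "n \<le> j" "block k z j \<noteq> we" by blast
  then show "\<exists>j\<ge>n. block k (w \<frown> z) j \<noteq> we"
    using block_conc_high[OF assms] by (metis trans_le_add2)
qed

lemma sigma_inf_conc:
  assumes k: "0 < k" and dvd: "k dvd length w" and es: "erasing_subst k \<sigma> we"
    and z: "nonerased_often k we z"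
  shows "sigma_inf k \<sigma> (w \<frown> z) = sigma_fin k \<sigma> w \<frown> sigma_inf k \<sigma> z"
proof -
  let ?u = "\<lambda>j. \<sigma> (block k (w \<frown> z) j)" and ?v = "\<lambda>j. \<sigma> (block k z j)"
  let ?R = "length w div k"
  have high: "?u (?R + j) = ?v j" for j by (simp add: block_conc_high[OF k dvd])
  have w: "(w \<frown> z) [0 \<rightarrow> length w] = w" by simp
  have low: "sigma_fin k \<sigma> w = concat (map ?u [0..<?R])"
    by (rule sigma_fin_eq_concat_blocks[OF w])
  have offs_high: "offs ?u (?R + j) = length (sigma_fin k \<sigma> w) + offs ?v j" for j
    unfolding offs_add[of ?u ?R] high low length_concat_offs ..
  have "is_concat (sigma_fin k \<sigma> w \<frown> sigma_inf k \<sigma> z) ?u"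
    unfolding is_concat_def
  proof (intro allI impI)
    fix j i assume i: "i < length (?u j)"
    show "(sigma_fin k \<sigma> w \<frown> sigma_inf k \<sigma> z) (offs ?u j + i) = ?u j ! i"
    proof (cases "j < ?R")
      case True
      have "offs ?u (Suc j) \<le> offs ?u ?R" using True by (intro offs_mono) simp
      then have "offs ?u j + i < length (sigma_fin k \<sigma> w)"
        using i by (simp add: low length_concat_offs offs_Suc)
      then show ?thesis using nth_concat_offs[where u = ?u, OF True i] by (simp add: low)
    next
      case False
      then obtain j' where j': "j = ?R + j'" by (metis le_add_diff_inverse not_less)
      then show ?thesis
        using i is_concat_inf_concat[of ?v] offs_high[of j'] high[of j']
        unfolding is_concat_def sigma_inf_def by simp
    qed
  qed
  moreover have "offs_unbounded ?u"
    using offs_unbounded_sigma[OF es nonerased_often_conc_iff[OF k dvd, THEN iffD2, OF z]] .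
  ultimately show ?thesis unfolding sigma_inf_def by (rule is_concat_unique[symmetric, rotated])
qed

section \<open>Eventually periodic words\<close>

definition eventually_periodic :: "(nat \<Rightarrow> 'a) \<Rightarrow> bool" where
  "eventually_periodic t \<longleftrightarrow> (\<exists>N p. 0 < p \<and> (\<forall>i\<ge>N. t (i + p) = t i))"

lemma periodic_add_mult:
  fixes m :: nat
  assumes "\<forall>i\<ge>N. t (i + p) = t i" and "N \<le> i"
  shows "t (i + m * p) = t i"
proof (induction m)
  case (Suc m)
  have "t (i + m * p + p) = t (i + m * p)" using assms by simp
  then show ?case using Suc by (simp add: algebra_simps)
qed simp

lemma eventually_periodic_conc_iter:
  assumes "c \<noteq> []"
  shows "eventually_periodic (w \<frown> c\<^sup>\<omega>)"
  unfolding eventually_periodic_def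
proof (intro exI conjI allI impI)
  have unroll: "c\<^sup>\<omega> (j + length c) = c\<^sup>\<omega> j" for j
    using assms by simp
  fix i assume "length w \<le> i"
  then have "i + length c - length w = (i - length w) + length c" by simp
  then have "(w \<frown> c\<^sup>\<omega>) (i + length c) = c\<^sup>\<omega> ((i - length w) + length c)"
    using \<open>length w \<le> i\<close> by simp
  also have "\<dots> = c\<^sup>\<omega> (i - length w)" by (rule unroll)
  also have "\<dots> = (w \<frown> c\<^sup>\<omega>) i" using \<open>length w \<le> i\<close> by simp
  finally show "(w \<frown> c\<^sup>\<omega>) (i + length c) = (w \<frown> c\<^sup>\<omega>) i" .
qed (use assms in simp)

lemma eventually_periodic_obtain_conc_iter:
  assumes "0 < k" and "eventually_periodic t"
  obtains w c where "k dvd length w" "k dvd length c" "c \<noteq> []" "t = w \<frown> c\<^sup>\<omega>"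
proof -
  obtain N p where p: "0 < p" "\<forall>i\<ge>N. t (i + p) = t i"
    using assms(2) unfolding eventually_periodic_def by blast
  let ?P = "k * p"
  have per: "\<forall>i\<ge>N. t (i + ?P) = t i"
    using periodic_add_mult[OF p(2), of _ k] by (simp add: mult.commute)
  define w where "w = t [0 \<rightarrow> N * k]"
  define c where "c = t [N * k \<rightarrow> N * k + ?P]"
  have lc: "length c = ?P" by (simp add: c_def)
  have t: "t = w \<frown> c\<^sup>\<omega>"
  proof
    fix i show "t i = (w \<frown> c\<^sup>\<omega>) i"
    proof (cases "i < N * k")
      case False
      define r where "r = (i - N * k) mod ?P"
      have "0 < ?P" using assms(1) p(1) by simp
      then have r: "r < ?P" by (simp add: r_def)
      have "i = (N * k + r) + ((i - N * k) div ?P) * ?P"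
        using False mod_div_mult_eq[of "i - N * k" ?P] unfolding r_def by linarith
      then have "t i = t ((N * k + r) + ((i - N * k) div ?P) * ?P)" by (rule arg_cong)
      also have "\<dots> = t (N * k + r)"
        using assms(1) by (intro periodic_add_mult[OF per]) (simp add: trans_le_add1)
      also have "\<dots> = c ! r" using r by (simp add: c_def)
      also have "\<dots> = (w \<frown> c\<^sup>\<omega>) i" using False r lc \<open>0 < ?P\<close> by (simp add: w_def r_def)
      finally show ?thesis .
    qed (simp add: w_def)
  qed
  have "c \<noteq> []" using assms(1) p(1) lc by auto
  moreover have "k dvd length w" by (simp add: w_def)
  ultimately show ?thesis using that[OF _ _ _ t] lc by simp
qed

lemma conc_fixpoint_eq_iter:
  assumes "d \<noteq> []" and "y = d \<frown> y"
  shows "y = d\<^sup>\<omega>"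
proof
  fix i show "y i = d\<^sup>\<omega> i"
  proof (induction i rule: less_induct)
    case (less i)
    show ?case
    proof (cases "i < length d")
      case True
      then have "y i = d ! i" by (subst assms(2)) simp
      then show ?thesis using True assms(1) by simp
    next
      case False
      then have "y i = y (i - length d)" by (subst assms(2)) simp
      also have "\<dots> = d\<^sup>\<omega> (i - length d)" using assms(1) False by (intro less.IH diff_less) (auto simp: not_less_iff_gr_or_eq)
      also have "\<dots> = d\<^sup>\<omega> i" using assms(1) False by (simp add: le_mod_geq)
      finally show ?thesis .
    qed
  qed
qed

lemma sigma_fin_period_nonempty:
  assumes k: "0 < k" and c: "k dvd length c" "c \<noteq> []"
    and es: "erasing_subst k \<sigma> we" and ne: "nonerased_often k we (c\<^sup>\<omega>)"
  shows "sigma_fin k \<sigma> c \<noteq> []"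
proof
  assume empty: "sigma_fin k \<sigma> c = []"
  let ?R = "length c div k"
  have R_pos: "0 < ?R" using c by (metis dvd_div_eq_0_iff length_0_conv neq0_conv)
  have unroll: "c \<frown> c\<^sup>\<omega> = c\<^sup>\<omega>" by (rule iter_unroll[symmetric]) (use c(2) in simp)
  have "c\<^sup>\<omega> [0 \<rightarrow> length c] = c" by (subst unroll[symmetric]) simp
  then have "\<sigma> (block k (c\<^sup>\<omega>) j) = []" if "j < ?R" for j
    using empty that sigma_fin_eq_concat_blocks[of "c\<^sup>\<omega>" c k \<sigma>] by simp
  then have low: "block k (c\<^sup>\<omega>) j = we" if "j < ?R" for j
    using es that unfolding erasing_subst_def by auto
  have "block k (c\<^sup>\<omega>) j = we" for j
  proof (induction j rule: less_induct)
    case (less j)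
    show ?case
    proof (cases "j < ?R")
      case False
      then have "block k (c\<^sup>\<omega>) j = block k (c\<^sup>\<omega>) (j - ?R)"
        using block_conc_high[OF k c(1), of "c\<^sup>\<omega>" "j - ?R"] by (simp add: unroll)
      also have "\<dots> = we" using R_pos False by (intro less.IH) linarith
      finally show ?thesis .
    qed (rule low)
  qed
  then show False using ne unfolding nonerased_often_def by simp
qed

lemma sigma_inf_conc_iter:
  assumes k: "0 < k" and w: "k dvd length w" and c: "k dvd length c" "c \<noteq> []"
    and es: "erasing_subst k \<sigma> we" and ne: "nonerased_often k we (w \<frown> c\<^sup>\<omega>)"
  shows "sigma_fin k \<sigma> c \<noteq> []"
    and "sigma_inf k \<sigma> (w \<frown> c\<^sup>\<omega>) = sigma_fin k \<sigma> w \<frown> (sigma_fin k \<sigma> c)\<^sup>\<omega>"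
proof -
  have ne_c: "nonerased_often k we (c\<^sup>\<omega>)" using ne nonerased_often_conc_iff[OF k w] by blast
  show nonempty: "sigma_fin k \<sigma> c \<noteq> []" by (rule sigma_fin_period_nonempty[OF k c es ne_c])
  have unroll: "c \<frown> c\<^sup>\<omega> = c\<^sup>\<omega>" by (rule iter_unroll[symmetric]) (use c(2) in simp)
  have "sigma_inf k \<sigma> (c\<^sup>\<omega>) = sigma_fin k \<sigma> c \<frown> sigma_inf k \<sigma> (c\<^sup>\<omega>)"
    using sigma_inf_conc[OF k c(1) es ne_c] by (simp only: unroll)
  then have "sigma_inf k \<sigma> (c\<^sup>\<omega>) = (sigma_fin k \<sigma> c)\<^sup>\<omega>"
    by (rule conc_fixpoint_eq_iter[OF nonempty])
  then show "sigma_inf k \<sigma> (w \<frown> c\<^sup>\<omega>) = sigma_fin k \<sigma> w \<frown> (sigma_fin k \<sigma> c)\<^sup>\<omega>"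
    using sigma_inf_conc[OF k w es ne_c] by simp
qed

lemma sigma_inf_eventually_periodic:
  assumes "0 < k" and "erasing_subst k \<sigma> we" and "nonerased_often k we t"
    and "eventually_periodic t"
  shows "eventually_periodic (sigma_inf k \<sigma> t)"
proof -
  obtain w c where "k dvd length w" "k dvd length c" "c \<noteq> []" "t = w \<frown> c\<^sup>\<omega>"
    using eventually_periodic_obtain_conc_iter[OF assms(1,4)] .
  then show ?thesis
    using sigma_inf_conc_iter[OF assms(1) _ _ _ assms(2)] assms(3) eventually_periodic_conc_iter by metis
qed

lemma not_eventually_periodic_INFM:
  assumes "\<not> eventually_periodic t"
  shows "\<exists>\<^sub>\<infinity>i. t i"
proof (rule ccontr)
  assume "\<not> (\<exists>\<^sub>\<infinity>i. t i)"
  then obtain n where "\<forall>i\<ge>n. \<not> t i" unfolding INFM_nat_le by blast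
  then have "\<forall>i\<ge>n. t (i + 1) = t i" by simp
  then show False using assms unfolding eventually_periodic_def by blast
qed

lemma not_eventually_periodic_nonerased_often:
  assumes k: "0 < k" and "length we = k" and "\<not> eventually_periodic t"
  shows "nonerased_often k we t"
proof (rule ccontr)
  assume "\<not> nonerased_often k we t"
  then obtain n where n: "\<forall>j\<ge>n. block k t j = we" unfolding nonerased_often_def INFM_nat_le by blast
  have "t (i + k) = t i" if i: "n * k \<le> i" for i
  proof -
    have r: "i mod k < k" using k by simp
    have "n \<le> i div k" using i k by (metis div_le_mono div_mult_self_is_m)
    then have "t (i div k * k + i mod k) = we ! (i mod k)"
      "t ((i div k + 1) * k + i mod k) = we ! (i mod k)"
      using n nth_block[OF r, of t] by (metis le_SucI Suc_eq_plus1)+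
    moreover have "(i div k + 1) * k + i mod k = i + k" by simp
    ultimately show ?thesis by simp
  qed
  then show False using assms(3) k unfolding eventually_periodic_def by blast
qed

definition power_of_two_word :: "nat \<Rightarrow> bool" where
  "power_of_two_word i \<longleftrightarrow> (\<exists>j. i = 2 ^ j)"

lemma not_eventually_periodic_power_of_two_word: "\<not> eventually_periodic power_of_two_word"
proof
  assume "eventually_periodic power_of_two_word"
  then obtain N p where p: "0 < p" and per: "\<forall>i\<ge>N. power_of_two_word (i + p) = power_of_two_word i"
    unfolding eventually_periodic_def by blast
  define a where "a = N + p"
  have a: "N \<le> (2::nat) ^ a" "p < (2::nat) ^ a"
    unfolding a_def using less_exp[of "N + p"] by linarith+
  have "power_of_two_word (2 ^ a)" by (auto simp: power_of_two_word_def)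
  then have "power_of_two_word (2 ^ a + p)" using per a by simp
  then obtain j where j: "2 ^ a + p = (2::nat) ^ j" by (auto simp: power_of_two_word_def)
  have "(2::nat) ^ a < 2 ^ j" using j p by linarith
  moreover have "(2::nat) ^ j < 2 ^ Suc a" using j a by simp
  ultimately have "a < j" "j < Suc a"
    by (metis power_strict_increasing_iff one_less_numeral_iff semiring_norm(76))+
  then show False by simp
qed

section \<open>Good orbits and preimages\<close>

definition good_orbit ::
  "nat \<Rightarrow> (bool list \<Rightarrow> bool list) \<Rightarrow> bool list \<Rightarrow> (nat \<Rightarrow> bool) \<Rightarrow> nat \<Rightarrow> (nat \<Rightarrow> bool) \<Rightarrow> bool" where
  "good_orbit k \<sigma> we t n y \<longleftrightarrow>
     (sigma_inf k \<sigma> ^^ n) t = y \<and> (\<forall>j<n. nonerased_often k we ((sigma_inf k \<sigma> ^^ j) t))"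

lemma good_orbit_0 [simp]: "good_orbit k \<sigma> we t 0 y \<longleftrightarrow> t = y"
  by (simp add: good_orbit_def)

lemma good_orbit_Suc:
  "good_orbit k \<sigma> we t (Suc n) y \<longleftrightarrow> nonerased_often k we t \<and> good_orbit k \<sigma> we (sigma_inf k \<sigma> t) n y"
  unfolding good_orbit_def funpow_Suc_right comp_apply
  by (auto simp: All_less_Suc2 funpow_Suc_right simp del: funpow.simps)

lemma good_orbit_trans:
  "good_orbit k \<sigma> we t n y \<Longrightarrow> good_orbit k \<sigma> we y m z \<Longrightarrow> good_orbit k \<sigma> we t (n + m) z"
  by (induction n arbitrary: t) (auto simp: good_orbit_Suc)

lemma good_orbit_not_eventually_periodic:
  assumes "0 < k" and "erasing_subst k \<sigma> we" and "good_orbit k \<sigma> we t n y"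
    and "\<not> eventually_periodic y" and "j \<le> n"
  shows "\<not> eventually_periodic ((sigma_inf k \<sigma> ^^ j) t)"
  using assms(3-5)
proof (induction n arbitrary: t j)
  case (Suc n)
  then have t: "nonerased_often k we t" and St: "good_orbit k \<sigma> we (sigma_inf k \<sigma> t) n y"
    by (simp_all add: good_orbit_Suc)
  show ?case
  proof (cases j)
    case 0
    then show ?thesis
      using Suc.IH[OF St Suc.prems(2), of 0] sigma_inf_eventually_periodic[OF assms(1,2) t] by auto
  next
    case (Suc j')
    then show ?thesis using Suc.IH[OF St Suc.prems(2), of j'] Suc.prems(3)
      by (simp add: funpow_Suc_right del: funpow.simps)
  qed
qed simp

lemma optimal_preimage:
  assumes k: "0 < k" and opt: "optimal k \<sigma>"
  obtains t where "sigma_inf k \<sigma> t = y" and "\<And>j. \<sigma> (block k t j) \<noteq> []"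
proof -
  obtain b where b: "\<And>i. length (b i) = k" "\<And>i. \<sigma> (b i) \<noteq> []" and y: "is_concat y (\<lambda>i. \<sigma> (b i))"
    using opt unfolding optimal_def by blast
  define t where "t i = b (i div k) ! (i mod k)" for i
  have blocks: "block k t j = b j" for j
    by (rule nth_equalityI) (simp_all add: b(1) t_def k)
  have "offs_unbounded (\<lambda>i. \<sigma> (b i))"
    unfolding offs_unbounded_def using offs_ge_index[of "\<lambda>i. \<sigma> (b i)"] b(2) by blast
  then have "sigma_inf k \<sigma> t = y"
    unfolding sigma_inf_def blocks using is_concat_unique y by metis
  then show ?thesis using that b(2) blocks by simp
qed

lemma nonerased_often_of_nonempty:
  assumes "erasing_subst k \<sigma> we" and "\<And>j. \<sigma> (block k t j) \<noteq> []"
  shows "nonerased_often k we t"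
  using assms unfolding erasing_subst_def nonerased_often_def INFM_nat_le by (metis order_refl)

lemma good_orbit_preimage:
  assumes "0 < k" and "optimal k \<sigma>" and "erasing_subst k \<sigma> we"
  shows "\<exists>t. good_orbit k \<sigma> we t N y"
proof (induction N arbitrary: y)
  case (Suc N)
  obtain t where t: "sigma_inf k \<sigma> t = y" "\<And>j. \<sigma> (block k t j) \<noteq> []"
    using optimal_preimage[OF assms(1,2), where y = y] by blast
  obtain t' where "good_orbit k \<sigma> we t' N t" using Suc.IH by blast
  moreover have "good_orbit k \<sigma> we t 1 y"
    using t nonerased_often_of_nonempty[OF assms(3)] by (simp add: good_orbit_Suc)
  ultimately show ?case using good_orbit_trans by fastforce
qed simp

lemma sigma_inf_preimage_extending:
  assumes k: "0 < k" and opt: "optimal k \<sigma>" and es: "erasing_subst k \<sigma> we"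
    and dvd: "k dvd length w" and y: "y [0 \<rightarrow> length (sigma_fin k \<sigma> w)] = sigma_fin k \<sigma> w"
  obtains t where "t [0 \<rightarrow> length w] = w" "nonerased_often k we t" "sigma_inf k \<sigma> t = y"
proof -
  obtain v z where yz: "y = v \<frown> z" "length v = length (sigma_fin k \<sigma> w)" by (rule word_split)
  then have "v = sigma_fin k \<sigma> w" using y by simp
  obtain t where t: "sigma_inf k \<sigma> t = z" "\<And>j. \<sigma> (block k t j) \<noteq> []"
    using optimal_preimage[OF k opt, where y = z] by blast
  have ne: "nonerased_often k we t" by (rule nonerased_often_of_nonempty[OF es t(2)])
  show ?thesis
  proof (rule that)
    show "nonerased_often k we (w \<frown> t)" using nonerased_often_conc_iff[OF k dvd] ne by blast
    show "sigma_inf k \<sigma> (w \<frown> t) = y"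
      using sigma_inf_conc[OF k dvd es ne] t(1) yz \<open>v = sigma_fin k \<sigma> w\<close> by simp
  qed simp
qed

lemma k_rounding_prefix: "k_rounding k w r \<Longrightarrow> prefix w r \<and> k dvd length r"
  unfolding k_rounding_def prefix_def by blast

lemma erasing_chain_good_orbit:
  assumes k: "0 < k" and opt: "optimal k \<sigma>" and es: "erasing_subst k \<sigma> we"
    and "rs \<noteq> []" and "\<forall>r\<in>set rs. k dvd length r"
    and "\<forall>j. Suc j < length rs \<longrightarrow> prefix (sigma_fin k \<sigma> (rs ! j)) (rs ! Suc j)"
    and "sigma_fin k \<sigma> (last rs) = []"
  shows "\<exists>t. t [0 \<rightarrow> length (hd rs)] = hd rs \<and> good_orbit k \<sigma> we t (length rs) y"
  using assms(4-)
proof (induction rs)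
  case (Cons r rs)
  have dvd: "k dvd length r" using Cons.prems(2) by simp
  obtain t' where t': "t' [0 \<rightarrow> length (sigma_fin k \<sigma> r)] = sigma_fin k \<sigma> r"
    and orbit': "good_orbit k \<sigma> we t' (length rs) y"
  proof (cases "rs = []")
    case True
    then show ?thesis using that[of y] Cons.prems(4) by simp
  next
    case False
    then obtain t' where "t' [0 \<rightarrow> length (hd rs)] = hd rs" "good_orbit k \<sigma> we t' (length rs) y"
      using Cons.IH Cons.prems by (fastforce simp: nth_Cons_Suc)
    moreover have "prefix (sigma_fin k \<sigma> r) (hd rs)"
      using Cons.prems(3) False by (metis hd_conv_nth length_Cons length_greater_0_conv nth_Cons_0 nth_Cons_Suc
          Suc_less_eq)
    ultimately show ?thesis using that prefix_of_word_prefix by blast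
  qed
  obtain t where "t [0 \<rightarrow> length r] = r" "nonerased_often k we t" "sigma_inf k \<sigma> t = t'"
    using sigma_inf_preimage_extending[OF k opt es dvd t'] .
  then show ?case using orbit' by (auto simp: good_orbit_Suc)
qed simp

lemma strongly_erasing_good_orbit:
  assumes k: "0 < k" and opt: "optimal k \<sigma>" and es: "erasing_subst k \<sigma> we"
    and se: "strongly_erasing k \<sigma>"
  obtains n t where "1 \<le> n" "t [0 \<rightarrow> length w] = w" "good_orbit k \<sigma> we t n y"
proof -
  obtain rs where rs: "rs \<noteq> []" "k_rounding k w (rs ! 0)"
    "\<forall>j. 1 \<le> j \<and> j < length rs \<longrightarrow> k_rounding k (sigma_fin k \<sigma> (rs ! (j - 1))) (rs ! j)"
    "sigma_fin k \<sigma> (last rs) = []"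
    using se unfolding strongly_erasing_def by blast
  have "\<forall>r\<in>set rs. k dvd length r"
    using rs(2,3) k_rounding_prefix by (metis in_set_conv_nth less_one not_less)
  moreover have "\<forall>j. Suc j < length rs \<longrightarrow> prefix (sigma_fin k \<sigma> (rs ! j)) (rs ! Suc j)"
    using rs(3) k_rounding_prefix by fastforce
  ultimately obtain t where t: "t [0 \<rightarrow> length (hd rs)] = hd rs" "good_orbit k \<sigma> we t (length rs) y"
    using erasing_chain_good_orbit[OF k opt es rs(1) _ _ rs(4)] by blast
  have "prefix w (hd rs)" using rs(1,2) k_rounding_prefix by (simp add: hd_conv_nth)
  then have "t [0 \<rightarrow> length w] = w" by (rule prefix_of_word_prefix[OF t(1)])
  moreover have "1 \<le> length rs" using rs(1) by (simp add: Suc_leI)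
  ultimately show ?thesis using that t(2) by blast
qed

section \<open>Finite approximations\<close>

lemma eventually_long_iterates:
  assumes k: "0 < k" and es: "erasing_subst k \<sigma> we"
    and "\<forall>j<m. nonerased_often k we ((sigma_inf k \<sigma> ^^ j) t)"
  shows "\<forall>\<^sub>F l in sequentially. q \<le> length ((sigma_fin k \<sigma> ^^ m) (t [0 \<rightarrow> l]))"
  using assms(3)
proof (induction m arbitrary: q)
  case 0
  then show ?case by (simp add: eventually_ge_at_top)
next
  case (Suc m)
  let ?x = "(sigma_inf k \<sigma> ^^ m) t"
  let ?u = "\<lambda>j. \<sigma> (block k ?x j)"
  have "offs_unbounded ?u" using offs_unbounded_sigma[OF es] Suc.prems by simp
  then obtain L where L: "q \<le> offs ?u L" unfolding offs_unbounded_def by blast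
  have "\<forall>\<^sub>F l in sequentially. L * k \<le> length ((sigma_fin k \<sigma> ^^ m) (t [0 \<rightarrow> l]))"
    using Suc by simp
  then show ?case
  proof (rule eventually_mono)
    fix l
    let ?w = "(sigma_fin k \<sigma> ^^ m) (t [0 \<rightarrow> l])"
    assume "L * k \<le> length ?w"
    then have "offs ?u L \<le> offs ?u (length ?w div k)"
      using k by (intro offs_mono) (metis div_le_mono div_mult_self_is_m)
    moreover have "?x [0 \<rightarrow> length ?w] = ?w" by (rule funpow_sigma_inf_prefix) simp
    then have "length (sigma_fin k \<sigma> ?w) = offs ?u (length ?w div k)"
      by (simp add: sigma_fin_eq_concat_blocks length_concat_offs)
    ultimately show "q \<le> length ((sigma_fin k \<sigma> ^^ Suc m) (t [0 \<rightarrow> l]))" using L by simp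
  qed
qed

definition witnesses_beyond :: "nat \<Rightarrow> bool list \<Rightarrow> nat \<Rightarrow> bool list \<Rightarrow> bool" where
  "witnesses_beyond k we N w \<longleftrightarrow> (\<exists>i. N \<le> i \<and> i < length w \<and> w ! i) \<and>
     (\<exists>j. N \<le> j \<and> Suc j * k \<le> length w \<and> take k (drop (j * k) w) \<noteq> we)"

lemma witnesses_beyond_word_prefix:
  assumes "x [0 \<rightarrow> length w] = w" and "witnesses_beyond k we N w"
  shows "\<exists>i\<ge>N. x i" and "\<exists>j\<ge>N. block k x j \<noteq> we"
proof -
  obtain i j where i: "N \<le> i" "i < length w" "w ! i"
    and j: "N \<le> j" "Suc j * k \<le> length w" "take k (drop (j * k) w) \<noteq> we"
    using assms(2) unfolding witnesses_beyond_def by blast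
  have "x i" using i subsequence_nth[of i "length w" 0 x] assms(1) by simp
  then show "\<exists>i\<ge>N. x i" using i(1) by blast
  show "\<exists>j\<ge>N. block k x j \<noteq> we" using j take_drop_eq_block[OF assms(1) j(2)] by auto
qed

lemma eventually_witnesses_beyond:
  assumes k: "0 < k" and es: "erasing_subst k \<sigma> we"
    and ne: "\<forall>j\<le>m. nonerased_often k we ((sigma_inf k \<sigma> ^^ j) t)"
    and ones: "\<exists>\<^sub>\<infinity>i. (sigma_inf k \<sigma> ^^ m) t i"
  shows "\<forall>\<^sub>F l in sequentially. witnesses_beyond k we N ((sigma_fin k \<sigma> ^^ m) (t [0 \<rightarrow> l]))"
proof -
  let ?x = "(sigma_inf k \<sigma> ^^ m) t"
  obtain i where i: "N \<le> i" "?x i" using ones unfolding INFM_nat_le by blast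
  obtain j where j: "N \<le> j" "block k ?x j \<noteq> we"
    using ne unfolding nonerased_often_def INFM_nat_le by blast
  have "\<forall>\<^sub>F l in sequentially. Suc i + Suc j * k \<le> length ((sigma_fin k \<sigma> ^^ m) (t [0 \<rightarrow> l]))"
    using ne by (intro eventually_long_iterates[OF k es]) simp
  then show ?thesis
  proof (rule eventually_mono)
    fix l
    let ?w = "(sigma_fin k \<sigma> ^^ m) (t [0 \<rightarrow> l])"
    assume long: "Suc i + Suc j * k \<le> length ?w"
    have w: "?x [0 \<rightarrow> length ?w] = ?w" by (rule funpow_sigma_inf_prefix) simp
    have "?w ! i" using long i w subsequence_nth[of i "length ?w" 0 ?x] by simp
    moreover have "take k (drop (j * k) ?w) \<noteq> we" using long j take_drop_eq_block[OF w] by simp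
    ultimately show "witnesses_beyond k we N ?w"
      unfolding witnesses_beyond_def using long i(1) j(1) by (intro conjI exI[of _ i] exI[of _ j]) auto
  qed
qed

lemma strongly_erasing_hitting_preimage:
  assumes k: "0 < k" and opt: "optimal k \<sigma>" and es: "erasing_subst k \<sigma> we"
    and se: "strongly_erasing k \<sigma>"
  obtains h t where "1 \<le> h" "t [0 \<rightarrow> length p] = p" "(sigma_inf k \<sigma> ^^ h) t [0 \<rightarrow> length W] = W"
    and "\<And>j. j \<le> h + N \<Longrightarrow>
      nonerased_often k we ((sigma_inf k \<sigma> ^^ j) t) \<and> (\<exists>\<^sub>\<infinity>i. (sigma_inf k \<sigma> ^^ j) t i)"
proof -
  have "length we = k" using es by (simp add: erasing_subst_def)
  obtain z where z: "good_orbit k \<sigma> we z N power_of_two_word"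
    using good_orbit_preimage[OF k opt es] by blast
  obtain n y where y: "y [0 \<rightarrow> length W] = W" "good_orbit k \<sigma> we y n z"
    using strongly_erasing_good_orbit[OF k opt es se] by metis
  obtain h t where t: "1 \<le> h" "t [0 \<rightarrow> length p] = p" "good_orbit k \<sigma> we t h y"
    using strongly_erasing_good_orbit[OF k opt es se] by metis
  have "good_orbit k \<sigma> we t (h + n + N) power_of_two_word" using t(3) y(2) z by (intro good_orbit_trans)
  then have aperiodic: "\<not> eventually_periodic ((sigma_inf k \<sigma> ^^ j) t)" if "j \<le> h + N" for j
    using good_orbit_not_eventually_periodic[OF k es _ not_eventually_periodic_power_of_two_word] that
    by simp
  show ?thesis
  proof (rule that)
    show "(sigma_inf k \<sigma> ^^ h) t [0 \<rightarrow> length W] = W" using t(3) y(1) by (simp add: good_orbit_def)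
    show "nonerased_often k we ((sigma_inf k \<sigma> ^^ j) t) \<and> (\<exists>\<^sub>\<infinity>i. (sigma_inf k \<sigma> ^^ j) t i)"
      if "j \<le> h + N" for j
      using aperiodic[OF that] not_eventually_periodic_nonerased_often[OF k \<open>length we = k\<close>]
        not_eventually_periodic_INFM by blast
  qed (use t in simp_all)
qed

lemma extension_step:
  assumes k: "0 < k" and opt: "optimal k \<sigma>" and es: "erasing_subst k \<sigma> we"
    and se: "strongly_erasing k \<sigma>"
  obtains p' h where "prefix p p'" "1 \<le> h" "prefix W ((sigma_fin k \<sigma> ^^ h) p')"
    "\<forall>m\<le>N. witnesses_beyond k we N ((sigma_fin k \<sigma> ^^ m) p')"
proof -
  obtain h t where t: "1 \<le> h" "t [0 \<rightarrow> length p] = p" "(sigma_inf k \<sigma> ^^ h) t [0 \<rightarrow> length W] = W"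
    and good: "\<And>j. j \<le> h + N \<Longrightarrow>
      nonerased_often k we ((sigma_inf k \<sigma> ^^ j) t) \<and> (\<exists>\<^sub>\<infinity>i. (sigma_inf k \<sigma> ^^ j) t i)"
    using strongly_erasing_hitting_preimage[OF k opt es se] by blast
  have "\<forall>\<^sub>F l in sequentially. length p \<le> l" by (rule eventually_ge_at_top)
  moreover have "\<forall>\<^sub>F l in sequentially. length W \<le> length ((sigma_fin k \<sigma> ^^ h) (t [0 \<rightarrow> l]))"
    using good by (intro eventually_long_iterates[OF k es]) simp
  moreover have "\<forall>\<^sub>F l in sequentially. \<forall>m\<in>{..N}. witnesses_beyond k we N ((sigma_fin k \<sigma> ^^ m) (t [0 \<rightarrow> l]))"
    using good by (intro eventually_ball_finite ballI eventually_witnesses_beyond[OF k es]) auto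
  ultimately have "\<forall>\<^sub>F l in sequentially. length p \<le> l \<and>
      length W \<le> length ((sigma_fin k \<sigma> ^^ h) (t [0 \<rightarrow> l])) \<and>
      (\<forall>m\<in>{..N}. witnesses_beyond k we N ((sigma_fin k \<sigma> ^^ m) (t [0 \<rightarrow> l])))"
    by (intro eventually_conj)
  then obtain l where l: "length p \<le> l" "length W \<le> length ((sigma_fin k \<sigma> ^^ h) (t [0 \<rightarrow> l]))"
    "\<forall>m\<in>{..N}. witnesses_beyond k we N ((sigma_fin k \<sigma> ^^ m) (t [0 \<rightarrow> l]))"
    unfolding eventually_sequentially by blast
  have "prefix p (t [0 \<rightarrow> l])" using l(1) t(2) by (simp add: prefix_subsequence_iff)
  moreover have "prefix W ((sigma_fin k \<sigma> ^^ h) (t [0 \<rightarrow> l]))"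
    using funpow_sigma_inf_prefix[where t = t and w = "t [0 \<rightarrow> l]" and m = h, simplified]
      t(3) l(2) prefix_subsequence_iff by metis
  ultimately show ?thesis using that t(1) l(3) by auto
qed

lemma nested_approximations:
  fixes W :: "nat \<Rightarrow> bool list"
  assumes k: "0 < k" and opt: "optimal k \<sigma>" and es: "erasing_subst k \<sigma> we"
    and se: "strongly_erasing k \<sigma>"
  obtains p where "p 0 = W 0" and "\<And>n. prefix (p n) (p (Suc n))"
    and "\<And>n. 0 < n \<Longrightarrow> \<exists>h\<ge>1. prefix (W n) ((sigma_fin k \<sigma> ^^ h) (p n))"
    and "\<And>n m. 0 < n \<Longrightarrow> m \<le> n \<Longrightarrow> witnesses_beyond k we n ((sigma_fin k \<sigma> ^^ m) (p n))"
proof -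
  define P where "P n w \<longleftrightarrow> (n = 0 \<longrightarrow> w = W 0) \<and> (0 < n \<longrightarrow>
      (\<exists>h\<ge>1. prefix (W n) ((sigma_fin k \<sigma> ^^ h) w)) \<and>
      (\<forall>m\<le>n. witnesses_beyond k we n ((sigma_fin k \<sigma> ^^ m) w)))" for n :: nat and w
  have "\<exists>p. \<forall>n. P n (p n) \<and> prefix (p n) (p (Suc n))"
  proof (rule dependent_nat_choice)
    fix w n
    obtain p' h where "prefix w p'" "1 \<le> h" "prefix (W (Suc n)) ((sigma_fin k \<sigma> ^^ h) p')"
      "\<forall>m\<le>Suc n. witnesses_beyond k we (Suc n) ((sigma_fin k \<sigma> ^^ m) p')"
      using extension_step[OF k opt es se] .
    then show "\<exists>p'. P (Suc n) p' \<and> prefix w p'" unfolding P_def by blast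
  qed (simp add: P_def)
  then show ?thesis using that unfolding P_def by blast
qed

lemma exists_word_with_good_iterates:
  fixes W :: "nat \<Rightarrow> bool list"
  assumes k: "0 < k" and opt: "optimal k \<sigma>" and es: "erasing_subst k \<sigma> we"
    and se: "strongly_erasing k \<sigma>"
  obtains s where "s [0 \<rightarrow> length (W 0)] = W 0"
    and "\<And>m. nonerased_often k we ((sigma_inf k \<sigma> ^^ m) s)"
    and "\<And>m. \<exists>\<^sub>\<infinity>i. (sigma_inf k \<sigma> ^^ m) s i"
    and "\<And>n. 1 \<le> n \<Longrightarrow> \<exists>h\<ge>1. (sigma_inf k \<sigma> ^^ h) s [0 \<rightarrow> length (W n)] = W n"
proof -
  obtain p where p0: "p 0 = W 0" and nested: "\<And>n. prefix (p n) (p (Suc n))"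
    and hits: "\<And>n. 0 < n \<Longrightarrow> \<exists>h\<ge>1. prefix (W n) ((sigma_fin k \<sigma> ^^ h) (p n))"
    and witnesses: "\<And>n m. 0 < n \<Longrightarrow> m \<le> n \<Longrightarrow> witnesses_beyond k we n ((sigma_fin k \<sigma> ^^ m) (p n))"
    using nested_approximations[OF k opt es se] by blast
  have "i < length (p (Suc i))" for i
    using witnesses[of "Suc i" 0] unfolding witnesses_beyond_def by auto
  then obtain s where s: "\<And>n. s [0 \<rightarrow> length (p n)] = p n"
    using nested_lists_limit[where p = p, OF nested] by blast
  have iterates: "(sigma_inf k \<sigma> ^^ m) s [0 \<rightarrow> length ((sigma_fin k \<sigma> ^^ m) (p n))] = (sigma_fin k \<sigma> ^^ m) (p n)"
    for m n by (rule funpow_sigma_inf_prefix[OF s])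
  have late: "(\<exists>i\<ge>B. (sigma_inf k \<sigma> ^^ m) s i) \<and> (\<exists>j\<ge>B. block k ((sigma_inf k \<sigma> ^^ m) s) j \<noteq> we)"
    for m B
  proof -
    have "witnesses_beyond k we (Suc (m + B)) ((sigma_fin k \<sigma> ^^ m) (p (Suc (m + B))))"
      by (rule witnesses) simp_all
    then show ?thesis using witnesses_beyond_word_prefix[OF iterates] by (meson Suc_leD le_add2 le_trans)
  qed
  show ?thesis
  proof (rule that)
    show "s [0 \<rightarrow> length (W 0)] = W 0" using s[of 0] p0 by simp
    show "nonerased_often k we ((sigma_inf k \<sigma> ^^ m) s)" for m
      using late unfolding nonerased_often_def INFM_nat_le by blast
    show "\<exists>\<^sub>\<infinity>i. (sigma_inf k \<sigma> ^^ m) s i" for m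
      using late unfolding INFM_nat_le by blast
    fix n :: nat assume "1 \<le> n"
    then obtain h where "1 \<le> h" "prefix (W n) ((sigma_fin k \<sigma> ^^ h) (p n))"
      using hits[of n] by auto
    then show "\<exists>h\<ge>1. (sigma_inf k \<sigma> ^^ h) s [0 \<rightarrow> length (W n)] = W n"
      using prefix_of_word_prefix[OF iterates] by blast
  qed
qed

section \<open>Binary expansions and the map \<open>f_sigma\<close>\<close>

lemma binary_digit_bound: "norm ((if b then 1 else 0) / 2 ^ (i + 1) :: real) \<le> (1/2) ^ Suc i"
  by (simp add: power_one_over)

lemma val_inf_summable: "summable (\<lambda>i. (if t i then 1 else 0) / 2 ^ (i + 1) :: real)"
  by (rule summable_comparison_test[OF _ sums_summable[OF power_half_series]])
     (use binary_digit_bound in blast)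

lemma val_inf_nonneg: "0 \<le> val_inf t"
  unfolding val_inf_def by (rule suminf_nonneg[OF val_inf_summable]) simp

lemma val_inf_le_1: "val_inf t \<le> 1"
proof -
  have "val_inf t \<le> (\<Sum>i. (1/2::real) ^ Suc i)"
    unfolding val_inf_def
    by (rule suminf_le[OF _ val_inf_summable sums_summable[OF power_half_series]])
       (use binary_digit_bound in \<open>auto simp: power_one_over\<close>)
  then show ?thesis using sums_unique[OF power_half_series] by simp
qed

lemma val_inf_pos: "t i \<Longrightarrow> 0 < val_inf t"
  unfolding val_inf_def by (rule suminf_pos2[OF val_inf_summable, where i = i]) auto

lemma val_inf_unfold: "val_inf t = (if t 0 then 1 else 0) / 2 + val_inf (\<lambda>i. t (Suc i)) / 2"
proof -
  have "(\<Sum>n. (if t (Suc n) then 1 else 0) / 2 ^ (Suc n + 1)) = val_inf t - (if t 0 then 1 else 0) / 2"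
    unfolding val_inf_def using suminf_split_head[OF val_inf_summable[of t]] by simp
  moreover have "(\<Sum>n. (if t (Suc n) then 1 else 0) / 2 ^ (Suc n + 1) :: real)
      = (\<Sum>n. (if t (Suc n) then 1 else 0) / 2 ^ (n + 1)) / 2"
    using suminf_divide[OF val_inf_summable[of "\<lambda>i. t (Suc i)"], of 2] by (simp add: mult.commute)
  ultimately show ?thesis unfolding val_inf_def by simp
qed

lemma val_inf_neq_of_first_difference:
  "\<forall>i<d. s i = t i \<Longrightarrow> s d \<noteq> t d \<Longrightarrow> \<exists>\<^sub>\<infinity>i. s i \<Longrightarrow> \<exists>\<^sub>\<infinity>i. t i \<Longrightarrow> val_inf s \<noteq> val_inf t"
proof (induction d arbitrary: s t)
  case 0
  have less: "val_inf b < val_inf a" if a0: "a 0" and b0: "\<not> b 0" and ones: "\<exists>\<^sub>\<infinity>i. a i" for a b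
  proof -
    obtain i where "a (Suc i)" using INFM_shift[OF ones] by (auto simp: INFM_nat_le)
    then have "0 < val_inf (\<lambda>i. a (Suc i))" by (rule val_inf_pos)
    then have "1/2 < val_inf a" using val_inf_unfold[of a] a0 by simp
    moreover have "val_inf b \<le> 1/2" using val_inf_unfold[of b] b0 val_inf_le_1[of "\<lambda>i. b (Suc i)"] by simp
    ultimately show ?thesis by simp
  qed
  show ?case using less[of s t] less[of t s] 0 by (cases "s 0") auto
next
  case (Suc d)
  have "val_inf (\<lambda>i. s (Suc i)) \<noteq> val_inf (\<lambda>i. t (Suc i))"
    using Suc.prems by (intro Suc.IH INFM_shift) auto
  moreover have "s 0 = t 0" using Suc.prems(1) by simp
  ultimately show ?case using val_inf_unfold[of s] val_inf_unfold[of t] by simp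
qed

lemma bexp_val_inf:
  assumes "\<exists>\<^sub>\<infinity>i. t i"
  shows "bexp (val_inf t) = t"
  unfolding bexp_def
proof (rule the_equality)
  show "val_inf t = val_inf t \<and> (\<forall>n. \<exists>m\<ge>n. t m)" using assms by (simp add: INFM_nat_le)
next
  fix s assume s: "val_inf s = val_inf t \<and> (\<forall>n. \<exists>m\<ge>n. s m)"
  show "s = t"
  proof (rule ccontr)
    assume "s \<noteq> t"
    define d where "d = (LEAST d. s d \<noteq> t d)"
    have "s d \<noteq> t d" unfolding d_def by (rule LeastI_ex) (use \<open>s \<noteq> t\<close> in auto)
    moreover have "\<forall>i<d. s i = t i" unfolding d_def using not_less_Least by blast
    ultimately show False
      using val_inf_neq_of_first_difference[of d s t] s assms by (simp add: INFM_nat_le)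
  qed
qed

lemma val_concat_eq_val_inf:
  assumes "offs_unbounded u"
  shows "val_concat u = val_inf (inf_concat u)"
proof -
  define a where "a i = ((if inf_concat u i then 1 else 0) / 2 ^ (i + 1) :: real)" for i
  have piece: "val_fin (u j) / 2 ^ offs u j = (\<Sum>x\<in>{offs u j..<offs u (Suc j)}. a x)" for j
  proof -
    have "val_fin (u j) / 2 ^ offs u j = (\<Sum>i<length (u j). a (i + offs u j))"
      unfolding val_fin_def sum_divide_distrib
    proof (rule sum.cong[OF refl])
      fix i assume "i \<in> {..<length (u j)}"
      then have "inf_concat u (offs u j + i) = u j ! i"
        using is_concat_inf_concat unfolding is_concat_def by simp
      then show "(if u j ! i then 1 else 0) / 2 ^ (i + 1) / 2 ^ offs u j = a (i + offs u j)"
        by (simp add: a_def power_add add.commute)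
    qed
    also have "\<dots> = (\<Sum>x\<in>{offs u j..<offs u (Suc j)}. a x)"
      using sum.shift_bounds_nat_ivl[of a 0 "offs u j" "length (u j)"]
      by (simp add: offs_Suc lessThan_atLeast0 add.commute)
    finally show ?thesis .
  qed
  have partial: "(\<Sum>j<J. val_fin (u j) / 2 ^ offs u j) = (\<Sum>x<offs u J. a x)" for J
  proof (induction J)
    case (Suc J)
    have "(\<Sum>x<offs u J. a x) + (\<Sum>x\<in>{offs u J..<offs u (Suc J)}. a x) = (\<Sum>x<offs u (Suc J). a x)"
      unfolding lessThan_atLeast0 by (rule sum.atLeastLessThan_concat) (simp_all add: offs_Suc)
    then show ?case using Suc piece by simp
  qed simp
  have "filterlim (offs u) at_top sequentially"
    unfolding filterlim_at_top eventually_sequentially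
    using assms offs_mono le_trans unfolding offs_unbounded_def by metis
  moreover have "summable a" unfolding a_def by (rule val_inf_summable)
  ultimately have "(\<lambda>J. \<Sum>x<offs u J. a x) \<longlonglongrightarrow> suminf a"
    using filterlim_compose[OF summable_LIMSEQ] by fastforce
  then have "(\<lambda>j. val_fin (u j) / 2 ^ offs u j) sums suminf a" unfolding sums_def partial .
  then show ?thesis unfolding val_concat_def val_inf_def a_def by (simp add: sums_unique[symmetric])
qed

lemma val_inf_in_cyl:
  assumes "t [0 \<rightarrow> length w] = w"
  shows "val_inf t \<in> cyl w"
proof -
  obtain v z where "t = v \<frown> z" "length v = length w" by (rule word_split)
  then have "t = w \<frown> z" using assms by simp
  then have "\<exists>z. val_inf t = val_inf (\<lambda>i. if i < length w then w ! i else z (i - length w))"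
    unfolding conc_def by blast
  then show ?thesis unfolding cyl_def using val_inf_nonneg val_inf_le_1 by blast
qed

lemma f_sigma_val_inf:
  assumes "erasing_subst k \<sigma> we" and ones: "\<exists>\<^sub>\<infinity>i. t i" and ne: "nonerased_often k we t"
  shows "f_sigma k \<sigma> we (val_inf t) = val_inf (sigma_inf k \<sigma> t)"
proof -
  obtain i j where "t i" "block k t j \<noteq> we"
    using ones ne unfolding nonerased_often_def INFM_nat_le by blast
  have "length we = k" using assms(1) by (simp add: erasing_subst_def)
  then have "block k (\<lambda>i. we ! (i mod k)) j = we" by (intro nth_equalityI) simp_all
  then have "bexp (val_inf t) \<noteq> (\<lambda>i. we ! (i mod k))"
    using \<open>block k t j \<noteq> we\<close> bexp_val_inf[OF ones] by auto
  then have "f_sigma k \<sigma> we (val_inf t) = val_concat (\<lambda>j. \<sigma> (block k t j))"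
    unfolding f_sigma_def using val_inf_pos[of t i, OF \<open>t i\<close>] val_inf_le_1[of t] bexp_val_inf[OF ones] by simp
  also have "\<dots> = val_inf (sigma_inf k \<sigma> t)"
    unfolding sigma_inf_def by (rule val_concat_eq_val_inf[OF offs_unbounded_sigma[OF assms(1) ne]])
  finally show ?thesis .
qed

theorem corollary2:
  fixes k :: nat and \<sigma> :: "bool list \<Rightarrow> bool list" and we :: "bool list"
    and W :: "nat \<Rightarrow> bool list"
  assumes "k \<ge> 2"
    and "erasing_subst k \<sigma> we"
    and "we \<noteq> replicate k True"
    and "strongly_erasing k \<sigma>"
    and "optimal k \<sigma>"
  shows "\<exists>x \<in> cyl (W 0). \<exists>h :: nat \<Rightarrow> nat.
           \<forall>n \<ge> 1. h n > 0 \<and> (f_sigma k \<sigma> we ^^ h n) x \<in> cyl (W n)"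
proof -
  have k: "0 < k" using assms(1) by simp
  obtain s where s: "s [0 \<rightarrow> length (W 0)] = W 0"
    and ne: "\<And>m. nonerased_often k we ((sigma_inf k \<sigma> ^^ m) s)"
    and ones: "\<And>m. \<exists>\<^sub>\<infinity>i. (sigma_inf k \<sigma> ^^ m) s i"
    and hits: "\<And>n. 1 \<le> n \<Longrightarrow> \<exists>h\<ge>1. (sigma_inf k \<sigma> ^^ h) s [0 \<rightarrow> length (W n)] = W n"
    using exists_word_with_good_iterates[OF k assms(5,2,4)] by blast
  have orbit: "(f_sigma k \<sigma> we ^^ m) (val_inf s) = val_inf ((sigma_inf k \<sigma> ^^ m) s)" for m
    by (induction m) (simp_all add: f_sigma_val_inf[OF assms(2) ones ne])
  have "\<forall>n. \<exists>h. 1 \<le> n \<longrightarrow> 0 < h \<and> (f_sigma k \<sigma> we ^^ h) (val_inf s) \<in> cyl (W n)"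
    using hits orbit val_inf_in_cyl by (metis less_le_trans zero_less_one)
  then obtain h where "\<forall>n\<ge>1. 0 < h n \<and> (f_sigma k \<sigma> we ^^ h n) (val_inf s) \<in> cyl (W n)"
    by (metis choice)
  then show ?thesis using val_inf_in_cyl[OF s] by blast
qed

end
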